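(* For every real sequence $u\in\mathbb R^{\mathbb N}$, $$\mathbf K^s_u=\inf_{(h,\beta)\in\Gamma(u)}\ \inf_{k\in\mathcal S(u,h)}\mathfrak F_u(k,h,\beta)=\inf_{(h,\beta)\in\Gamma(u)}\ \inf_{k\in\mathcal S(u,h)}\frac{\ln(h^{-1}_{[0,1]}(u_k))}{\ln\beta},$$ with $\inf\emptyset=+\infty$. Moreover, when $G^{>}_u\neq\emptyset$, both infima are attained (they are minima).
   Context: $\Delta^s_u=\{k\in\mathbb N:\max_{0\le j\le k}u_j>\sup_{j>k}u_j\}$, $\mathbf K^s_u=\inf\Delta^s_u$; $G^{>}_u=\{k:u_k>\limsup_n u_n\}$. $\Omega([0,1])$: functions $h:\mathbb R\to\mathbb R$ whose restriction to $[0,1]$ is strictly increasing and continuous; $h^{-1}_{[0,1]}$ the inverse of that restriction. $\Gamma(u)=\{(h,\beta)\in\Omega([0,1])\times(0,1):u_k\le h(\beta^k)\ \forall k\}$; $\mathcal S(u,h)=\{k:u_k>h(0)\}$. $\mathfrak F_u(k,h,\beta)=\ln(h^{-1}_{[0,1]}(u_k))/\ln\beta$ if $(h,\beta)\in\Gamma(u)$ and $k\in\mathcal S(u,h)$, and $+\infty$ otherwise. *)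

theory Defs
  imports "HOL-Analysis.Analysis" "HOL-Library.Liminf_Limsup"
begin

definition DeltaS :: "(nat \<Rightarrow> real) \<Rightarrow> nat set" where
  "DeltaS u = {k. ereal (MAX j\<in>{..k}. u j) > (SUP j\<in>{k<..}. ereal (u j))}"

definition KS :: "(nat \<Rightarrow> real) \<Rightarrow> ereal" where
  "KS u = (INF k\<in>DeltaS u. ereal (real k))"

definition Gbig :: "(nat \<Rightarrow> real) \<Rightarrow> nat set" where
  "Gbig u = {k. ereal (u k) > limsup (\<lambda>n. ereal (u n))}"

definition Omega01 :: "(real \<Rightarrow> real) set" where
  "Omega01 = {h. strict_mono_on {0..1} h \<and> continuous_on {0..1} h}"

definition inv01 :: "(real \<Rightarrow> real) \<Rightarrow> real \<Rightarrow> real" where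
  "inv01 h = the_inv_into {0..1} h"

definition Gamma :: "(nat \<Rightarrow> real) \<Rightarrow> ((real \<Rightarrow> real) \<times> real) set" where
  "Gamma u = {(h, \<beta>). h \<in> Omega01 \<and> 0 < \<beta> \<and> \<beta> < 1 \<and> (\<forall>k. u k \<le> h (\<beta> ^ k))}"

definition Sset :: "(nat \<Rightarrow> real) \<Rightarrow> (real \<Rightarrow> real) \<Rightarrow> nat set" where
  "Sset u h = {k. u k > h 0}"

definition Fu :: "(nat \<Rightarrow> real) \<Rightarrow> nat \<Rightarrow> (real \<Rightarrow> real) \<Rightarrow> real \<Rightarrow> ereal" where
  "Fu u k h \<beta> = (if (h, \<beta>) \<in> Gamma u \<and> k \<in> Sset u h
      then ereal (ln (inv01 h (u k)) / ln \<beta>) else \<infinity>)"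

end

theory Submission
  imports Defs
begin

text \<open>
  If \<open>(h, \<beta>) \<in> Gamma u\<close> and \<open>u k > h 0\<close>, then \<open>u k = h x\<close> for some \<open>0 < x \<le> 1\<close>, and
  \<open>n = \<lfloor>ln x / ln \<beta>\<rfloor>\<close> satisfies \<open>\<beta> ^ (n + 1) < x\<close>. Hence the tail \<open>u j \<le> h (\<beta> ^ j) \<le> h (\<beta> ^ (n + 1))\<close>,
  \<open>j > n\<close>, stays strictly below \<open>u k\<close>, so \<open>n \<in> DeltaS u\<close> lies below the ratio. Conversely, for
  \<open>n \<in> DeltaS u\<close> the affine \<open>h\<close> that starts at a level \<open>c\<close> strictly between the tail supremum and
  \<open>M = max {u j | j \<le> n}\<close> and reaches \<open>M\<close> at \<open>(1/2) ^ n\<close> realises the ratio \<open>n\<close>. If some \<open>u k\<close> exceeds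
  the limsup, \<open>DeltaS u\<close> is nonempty and its least element gives the minimum.
\<close>

lemma inv01_apply:
  assumes "strict_mono_on {0..1} h" and "x \<in> {0..1}"
  shows "inv01 h (h x) = x"
  unfolding inv01_def using assms by (simp add: strict_mono_on_imp_inj_on the_inv_into_f_f)

lemma Gamma_le_pow:
  assumes "(h, \<beta>) \<in> Gamma u" and "k \<le> j"
  shows "u j \<le> h (\<beta> ^ k)"
proof -
  from assms(1) have sm: "strict_mono_on {0..1} h" and b: "0 < \<beta>" "\<beta> < 1"
    and ub: "u j \<le> h (\<beta> ^ j)"
    by (auto simp: Gamma_def Omega01_def)
  have "\<beta> ^ j \<le> \<beta> ^ k" using b assms(2) by (intro power_decreasing) auto
  then have "h (\<beta> ^ j) \<le> h (\<beta> ^ k)"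
    by (rule strict_mono_on_leD[OF sm, rotated 2]) (use b in \<open>auto simp: power_le_one\<close>)
  with ub show ?thesis by linarith
qed

lemma DeltaS_memI:
  assumes "k \<le> n" and "\<And>j. n < j \<Longrightarrow> u j \<le> c" and "c < u k"
  shows "n \<in> DeltaS u"
proof -
  have "(SUP j\<in>{n<..}. ereal (u j)) \<le> ereal c"
    by (rule SUP_least) (use assms(2) in auto)
  also have "\<dots> < ereal (u k)" using assms(3) by simp
  also have "u k \<le> (MAX j\<in>{..n}. u j)" using assms(1) by (intro Max_ge) auto
  finally show ?thesis unfolding DeltaS_def by simp
qed

lemma DeltaS_memE:
  assumes "n \<in> DeltaS u"
  obtains k c where "k \<le> n" "\<And>j. j \<le> n \<Longrightarrow> u j \<le> u k"
    "\<And>j. n < j \<Longrightarrow> u j < c" "c < u k"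
proof -
  obtain k where k: "k \<le> n" "u k = (MAX j\<in>{..n}. u j)"
    using Max_in[of "u ` {..n}"] by fastforce
  from assms have "(SUP j\<in>{n<..}. ereal (u j)) < ereal (u k)"
    unfolding DeltaS_def k(2) by (rule CollectD)
  then obtain c where c: "(SUP j\<in>{n<..}. ereal (u j)) < ereal c" "c < u k"
    using ereal_dense2 by fastforce
  have less: "u j < c" if "n < j" for j
  proof -
    have "ereal (u j) \<le> (SUP j\<in>{n<..}. ereal (u j))" using that by (intro SUP_upper) auto
    then have "ereal (u j) < ereal c" using c(1) by (rule le_less_trans)
    then show ?thesis by simp
  qed
  have le: "u j \<le> u k" if "j \<le> n" for j
    unfolding k(2) using that by (intro Max_ge) auto
  show thesis by (rule that[OF k(1) le less c(2)])
qed

lemma floor_log_ratio_pow_less: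
  fixes \<beta> x :: real
  assumes "0 < \<beta>" "\<beta> < 1" "0 < x" "x \<le> 1"
  defines "n \<equiv> nat \<lfloor>ln x / ln \<beta>\<rfloor>"
  shows "real n \<le> ln x / ln \<beta>" and "\<beta> ^ Suc n < x"
proof -
  have lnb: "ln \<beta> < 0" using assms(1,2) by simp
  have "0 \<le> ln x / ln \<beta>" using lnb assms(3,4) by (simp add: divide_nonpos_neg)
  then show "real n \<le> ln x / ln \<beta>" unfolding n_def by linarith
  have up: "ln x / ln \<beta> < real n + 1" unfolding n_def by linarith
  have "ln (\<beta> ^ Suc n) = (real n + 1) * ln \<beta>" using assms(1) by (simp only: ln_realpow) simp
  also have "\<dots> < ln x" using up lnb by (simp add: divide_less_eq mult.commute)
  finally show "\<beta> ^ Suc n < x" using assms(1,3) by simp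
qed

lemma DeltaS_le_ratio:
  assumes G: "(h, \<beta>) \<in> Gamma u" and S: "k \<in> Sset u h"
  shows "\<exists>n\<in>DeltaS u. real n \<le> ln (inv01 h (u k)) / ln \<beta>"
proof -
  from G have sm: "strict_mono_on {0..1} h" and co: "continuous_on {0..1} h"
    and b: "0 < \<beta>" "\<beta> < 1"
    by (auto simp: Gamma_def Omega01_def)
  from S have hk: "h 0 < u k" by (simp add: Sset_def)
  have "u k \<le> h 1" using Gamma_le_pow[OF G, of 0 k] by simp
  then obtain x where x: "0 \<le> x" "x \<le> 1" "h x = u k"
    using IVT'[of h 0 "u k" 1] co hk by auto
  with hk have "0 < x" by (cases "x = 0") auto
  obtain n where n: "real n \<le> ln x / ln \<beta>" "\<beta> ^ Suc n < x"
    using floor_log_ratio_pow_less[OF b \<open>0 < x\<close> x(2)] by blast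
  have below: "h (\<beta> ^ Suc n) < u k"
    using n(2) x sm b by (simp add: strict_mono_on_less power_le_one flip: x(3))
  have tail: "u j \<le> h (\<beta> ^ Suc n)" if "n < j" for j
    using Gamma_le_pow[OF G, of "Suc n" j] that by simp
  have "k \<le> n" using tail[of k] below by fastforce
  then have "n \<in> DeltaS u" using tail below by (rule DeltaS_memI)
  moreover have "inv01 h (u k) = x" using inv01_apply[OF sm] x by (simp flip: x(3))
  ultimately show ?thesis using n(1) by auto
qed

lemma DeltaS_attained:
  assumes "n \<in> DeltaS u"
  shows "\<exists>h \<beta> k. (h, \<beta>) \<in> Gamma u \<and> k \<in> Sset u h \<and> ln (inv01 h (u k)) / ln \<beta> = real n"
proof -
  obtain k c where k: "k \<le> n" "\<And>j. j \<le> n \<Longrightarrow> u j \<le> u k"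
    and c: "\<And>j. n < j \<Longrightarrow> u j < c" "c < u k"
    using DeltaS_memE[OF assms] by blast
  define \<beta> :: real where "\<beta> = 1/2"
  define d where "d = (u k - c) / \<beta> ^ n"
  define h where "h x = c + d * x" for x
  have slope: "d > 0" unfolding d_def \<beta>_def using c(2) by simp
  have hn: "h (\<beta> ^ n) = u k" unfolding h_def d_def \<beta>_def by simp
  have sm: "strict_mono_on {0..1} h" unfolding strict_mono_on_def h_def using slope by simp
  have "continuous_on {0..1} h" unfolding h_def by (intro continuous_intros)
  moreover have "u j \<le> h (\<beta> ^ j)" for j
  proof (cases "j \<le> n")
    case True
    have "\<beta> ^ n \<le> \<beta> ^ j" unfolding \<beta>_def using True by (intro power_decreasing) auto
    then have "d * \<beta> ^ n \<le> d * \<beta> ^ j" using slope by (simp add: mult_left_mono)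
    then have "u k \<le> h (\<beta> ^ j)" using hn unfolding h_def by linarith
    then show ?thesis using k(2) True by fastforce
  next
    case False
    have "c \<le> h (\<beta> ^ j)" unfolding h_def \<beta>_def using slope by simp
    then show ?thesis using c(1)[of j] False by simp
  qed
  ultimately have G: "(h, \<beta>) \<in> Gamma u"
    unfolding Gamma_def Omega01_def using sm by (simp add: \<beta>_def)
  have S: "k \<in> Sset u h" unfolding Sset_def h_def using c(2) by simp
  have "inv01 h (u k) = \<beta> ^ n"
    using inv01_apply[OF sm, of "\<beta> ^ n"] hn by (simp add: \<beta>_def power_le_one)
  then have "ln (inv01 h (u k)) / ln \<beta> = real n" by (simp add: ln_realpow \<beta>_def)
  with G S show ?thesis by blast
qed

lemma DeltaS_nonempty_if_Gbig:
  assumes "Gbig u \<noteq> {}"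
  shows "DeltaS u \<noteq> {}"
proof -
  from assms obtain k where "limsup (\<lambda>n. ereal (u n)) < ereal (u k)"
    unfolding Gbig_def by auto
  then obtain c where c: "limsup (\<lambda>n. ereal (u n)) < ereal c" "c < u k"
    using ereal_dense2 by fastforce
  have "eventually (\<lambda>n. ereal (u n) < ereal c) sequentially"
    using Limsup_lessD[OF c(1)] by simp
  then obtain N where N: "\<And>j. N \<le> j \<Longrightarrow> u j < c" by (auto simp: eventually_sequentially)
  have "max N k \<in> DeltaS u"
    by (rule DeltaS_memI[of k _ u c]) (use N c(2) in \<open>auto intro: less_imp_le\<close>)
  then show ?thesis by auto
qed

lemma KS_eq_Least:
  assumes "DeltaS u \<noteq> {}"
  shows "KS u = ereal (real (LEAST n. n \<in> DeltaS u))"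
  unfolding KS_def
proof (rule antisym)
  show "(INF k\<in>DeltaS u. ereal (real k)) \<le> ereal (real (LEAST n. n \<in> DeltaS u))"
    using assms by (intro INF_lower) (auto intro: LeastI)
  show "ereal (real (LEAST n. n \<in> DeltaS u)) \<le> (INF k\<in>DeltaS u. ereal (real k))"
    by (rule INF_greatest) (auto intro: Least_le)
qed

lemma KS_eq_INF_ratio:
  "KS u = (INF p\<in>Gamma u. INF k\<in>Sset u (fst p). ereal (ln (inv01 (fst p) (u k)) / ln (snd p)))"
  (is "_ = (INF p\<in>Gamma u. ?F p)")
proof (rule antisym)
  show "KS u \<le> (INF p\<in>Gamma u. ?F p)"
  proof (intro INF_greatest)
    fix p k assume "p \<in> Gamma u" and "k \<in> Sset u (fst p)"
    then obtain n where n: "n \<in> DeltaS u" and le: "real n \<le> ln (inv01 (fst p) (u k)) / ln (snd p)"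
      using DeltaS_le_ratio[of "fst p" "snd p"] by auto
    have "KS u \<le> ereal (real n)" unfolding KS_def using n by (rule INF_lower)
    also have "\<dots> \<le> ereal (ln (inv01 (fst p) (u k)) / ln (snd p))" using le by simp
    finally show "KS u \<le> ereal (ln (inv01 (fst p) (u k)) / ln (snd p))" .
  qed
  show "(INF p\<in>Gamma u. ?F p) \<le> KS u"
    unfolding KS_def
  proof (rule INF_greatest)
    fix n assume "n \<in> DeltaS u"
    then obtain h \<beta> k where G: "(h, \<beta>) \<in> Gamma u" "k \<in> Sset u h"
      and val: "ln (inv01 h (u k)) / ln \<beta> = real n"
      using DeltaS_attained by blast
    have "(INF p\<in>Gamma u. ?F p) \<le> ?F (h, \<beta>)" using G(1) by (rule INF_lower)
    also have "\<dots> \<le> ereal (ln (inv01 h (u k)) / ln \<beta>)" using G(2) unfolding prod.sel by (rule INF_lower)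
    finally show "(INF p\<in>Gamma u. ?F p) \<le> ereal (real n)" using val by simp
  qed
qed

theorem mainTheorem8:
  fixes u :: "nat \<Rightarrow> real"
  shows "KS u = (INF p\<in>Gamma u. INF k\<in>Sset u (fst p). Fu u k (fst p) (snd p))
     \<and> KS u = (INF p\<in>Gamma u. INF k\<in>Sset u (fst p).
                 ereal (ln (inv01 (fst p) (u k)) / ln (snd p)))
     \<and> (Gbig u \<noteq> {} \<longrightarrow>
          (\<exists>h \<beta> k. (h, \<beta>) \<in> Gamma u \<and> k \<in> Sset u h \<and> Fu u k h \<beta> = KS u))"
proof -
  have "(INF p\<in>Gamma u. INF k\<in>Sset u (fst p). Fu u k (fst p) (snd p))
     = (INF p\<in>Gamma u. INF k\<in>Sset u (fst p). ereal (ln (inv01 (fst p) (u k)) / ln (snd p)))"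
    by (intro INF_cong refl) (auto simp: Fu_def)
  moreover have "\<exists>h \<beta> k. (h, \<beta>) \<in> Gamma u \<and> k \<in> Sset u h \<and> Fu u k h \<beta> = KS u"
    if "Gbig u \<noteq> {}"
  proof -
    have ne: "DeltaS u \<noteq> {}" using that by (rule DeltaS_nonempty_if_Gbig)
    then have "(LEAST n. n \<in> DeltaS u) \<in> DeltaS u" by (auto intro: LeastI)
    then show ?thesis
      using DeltaS_attained KS_eq_Least[OF ne] by (fastforce simp: Fu_def)
  qed
  ultimately show ?thesis using KS_eq_INF_ratio by simp
qed

end
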